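(* For every forward trie $\mathsf{T}_f$ with $n$ nodes, over any alphabet, the suffix array of $\mathsf{T}_f$ has size $O(n^2)$. Moreover, there exist forward tries $\mathsf{T}_f$ with $n$ nodes, for arbitrarily large $n$ and over an alphabet of constant size, whose suffix array has size $\Omega(n^2)$.
   Context: An alphabet $\Sigma$ is a finite ordered set of characters. A forward trie $\mathsf{T}_f$ is a rooted tree with $n$ nodes in which every edge is directed from parent to child and labeled by a single character of $\Sigma$, such that the edges leaving any node carry pairwise distinct labels. For nodes $u,v$ with $u$ an ancestor of $v$ (possibly $u=v$), $\mathrm{str}_f(u,v)$ is the string of labels read along the downward path from $u$ to $v$. Define $\mathrm{Suffix}(\mathsf{T}_f)=\{\mathrm{str}_f(u,\ell): \ell \text{ a leaf},\ u \text{ an ancestor of } \ell\}$. For a finite set $S$ of strings, its compact tree is obtained from the trie of all prefixes of strings in $S$ by deleting every non-root node that has exactly one child and merging its two incident edges into one edge labeled by the concatenation of their labels. The suffix tree $\mathsf{STree}(\mathsf{T}_f)$ is the compact tree of $\mathrm{Suffix}(\mathsf{T}_f)$. The suffix array of $\mathsf{T}_f$ is the array listing the leaves of $\mathsf{STree}(\mathsf{T}_f)$ in lexicographic order of the strings they spell; its size is the number of leaves of $\mathsf{STree}(\mathsf{T}_f)$. *)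

theory Defs
  imports Complex_Main
begin

text \<open>A forward trie over the alphabet \<Sigma>: finite node set V, root r, parent
  function par (par v is the parent of the non-root node v) and lab v is the label
  of the edge from par v to v.\<close>
definition forward_trie ::
  "'a set \<Rightarrow> 'v set \<Rightarrow> 'v \<Rightarrow> ('v \<Rightarrow> 'v) \<Rightarrow> ('v \<Rightarrow> 'a) \<Rightarrow> bool" where
  "forward_trie \<Sigma> V r par lab \<longleftrightarrow>
     finite \<Sigma> \<and> finite V \<and> r \<in> V \<and>
     (\<forall>v\<in>V. v \<noteq> r \<longrightarrow> par v \<in> V \<and> lab v \<in> \<Sigma>) \<and>
     (\<forall>v\<in>V. \<exists>k. (par ^^ k) v = r) \<and>
     (\<forall>v\<in>V. \<forall>w\<in>V. v \<noteq> r \<and> w \<noteq> r \<and> v \<noteq> w \<and> par v = par w \<longrightarrow> lab v \<noteq> lab w)"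

definition trie_leaves :: "'v set \<Rightarrow> 'v \<Rightarrow> ('v \<Rightarrow> 'v) \<Rightarrow> 'v set" where
  "trie_leaves V r par = {v \<in> V. \<not> (\<exists>w\<in>V. w \<noteq> r \<and> par w = v)}"

definition valid_up :: "'v \<Rightarrow> ('v \<Rightarrow> 'v) \<Rightarrow> nat \<Rightarrow> 'v \<Rightarrow> bool" where
  "valid_up r par k v \<longleftrightarrow> (\<forall>i<k. (par ^^ i) v \<noteq> r)"

text \<open>str_f((par^^k) v, v): labels read downward from the ancestor to v.\<close>
definition up_str :: "('v \<Rightarrow> 'v) \<Rightarrow> ('v \<Rightarrow> 'a) \<Rightarrow> nat \<Rightarrow> 'v \<Rightarrow> 'a list" where
  "up_str par lab k v = rev (map (\<lambda>i. lab ((par ^^ i) v)) [0..<k])"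

definition trie_Suffix :: "'v set \<Rightarrow> 'v \<Rightarrow> ('v \<Rightarrow> 'v) \<Rightarrow> ('v \<Rightarrow> 'a) \<Rightarrow> 'a list set" where
  "trie_Suffix V r par lab =
     {up_str par lab k l | k l. l \<in> trie_leaves V r par \<and> valid_up r par k l}"

text \<open>Compact tree of a finite string set S: the nodes of the trie of all prefixes
  are the prefix strings; the compact tree keeps the root and the nodes whose
  number of children is not 1. Its leaves are its nodes with no proper extension
  among its nodes.\<close>
definition Pref :: "'a list set \<Rightarrow> 'a list set" where
  "Pref S = {p. \<exists>s\<in>S. \<exists>t. p @ t = s}"

definition ctree_nodes :: "'a list set \<Rightarrow> 'a list set" where
  "ctree_nodes S = {p \<in> Pref S. p = [] \<or> card {c. p @ [c] \<in> Pref S} \<noteq> 1}"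

definition ctree_leaves :: "'a list set \<Rightarrow> 'a list set" where
  "ctree_leaves S = {p \<in> ctree_nodes S. \<not> (\<exists>q\<in>ctree_nodes S. \<exists>t. t \<noteq> [] \<and> q = p @ t)}"

text \<open>Size of the suffix array = number of leaves of STree(T_f).\<close>
definition suffix_array_size :: "'v set \<Rightarrow> 'v \<Rightarrow> ('v \<Rightarrow> 'v) \<Rightarrow> ('v \<Rightarrow> 'a) \<Rightarrow> nat" where
  "suffix_array_size V r par lab = card (ctree_leaves (trie_Suffix V r par lab))"

end

theory Submission
  imports Defs
begin

text \<open>A suffix is read upwards from a leaf l and is determined by l and its length k, and
  k is at most the number n of nodes because the ancestors of l are distinct; so Suffix(T_f)
  has at most n(n + 1) elements, and every leaf of the compact tree of a finite set S lies in S.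

  For the lower bound take the comb: a path a^m b^m with a pendant edge labelled $ below each
  b-node. Its suffixes include a^i b^j $ for i \<le> m and 1 \<le> j \<le> m. Since $ occurs in a
  suffix only as its last letter, none of these is a proper prefix of another suffix, so each
  is a leaf of the suffix tree: m(m + 1) leaves for 3m + 1 nodes.\<close>

lemma finite_Pref: "finite S \<Longrightarrow> finite (Pref S)"
proof -
  assume "finite S"
  have "Pref S \<subseteq> (\<Union>s\<in>S. (\<lambda>k. take k s) ` {..length s})"
  proof
    fix p assume "p \<in> Pref S"
    then obtain s t where "s \<in> S" "p @ t = s" unfolding Pref_def by blast
    then show "p \<in> (\<Union>s\<in>S. (\<lambda>k. take k s) ` {..length s})"
      by (auto intro!: bexI[of _ s] image_eqI[of _ _ "length p"])
  qed
  moreover have "finite (\<Union>s\<in>S. (\<lambda>k. take k s) ` {..length s})" using \<open>finite S\<close> by auto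
  ultimately show ?thesis by (rule finite_subset)
qed

text \<open>A leaf p of the compact tree lies in S: otherwise a longest proper extension of p
  in Pref S would be a childless node below p.\<close>
lemma ctree_leaves_subset: "finite S \<Longrightarrow> ctree_leaves S \<subseteq> S"
proof
  fix p assume "finite S" and leaf: "p \<in> ctree_leaves S"
  show "p \<in> S"
  proof (rule ccontr)
    assume "p \<notin> S"
    from leaf have "p \<in> Pref S" unfolding ctree_leaves_def ctree_nodes_def by auto
    then obtain s t where s: "s \<in> S" "p @ t = s" unfolding Pref_def by blast
    define E where "E = {q \<in> Pref S. \<exists>t. t \<noteq> [] \<and> q = p @ t}"
    have "s \<in> E" using s \<open>p \<notin> S\<close> unfolding E_def Pref_def by auto
    moreover have "finite E" using finite_Pref[OF \<open>finite S\<close>] unfolding E_def by auto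
    ultimately obtain q where qE: "q \<in> E" and longest: "\<And>q'. q' \<in> E \<Longrightarrow> length q' \<le> length q"
      by (metis (mono_tags) Max_ge Max_in finite_imageI image_iff image_is_empty empty_iff)
    have "{c. q @ [c] \<in> Pref S} = {}"
      using qE longest[of "q @ [_]"] unfolding E_def by fastforce
    then have "q \<in> ctree_nodes S" using qE unfolding E_def ctree_nodes_def by auto
    with leaf qE show False unfolding ctree_leaves_def E_def by auto
  qed
qed

lemma ctree_leavesI:
  assumes "p \<in> S" and maximal: "\<And>u. p @ u \<in> S \<Longrightarrow> u = []"
  shows "p \<in> ctree_leaves S"
proof -
  have no_ext: "p @ u \<notin> Pref S" if "u \<noteq> []" for u
    using that maximal unfolding Pref_def by fastforce
  have "p \<in> Pref S" using assms(1) unfolding Pref_def by force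
  moreover have "{c. p @ [c] \<in> Pref S} = {}" using no_ext by auto
  ultimately have "p \<in> ctree_nodes S" unfolding ctree_nodes_def by simp
  with no_ext show ?thesis unfolding ctree_leaves_def ctree_nodes_def by auto
qed

lemma up_str_Suc: "up_str par lab (Suc k) v = up_str par lab k (par v) @ [lab v]"
proof -
  have "[0..<Suc k] = 0 # map Suc [0..<k]" by (simp add: map_Suc_upt upt_conv_Cons)
  then show ?thesis unfolding up_str_def by (simp add: funpow_swap1)
qed

lemma nth_up_str: "p < k \<Longrightarrow> up_str par lab k v ! p = lab ((par ^^ (k - Suc p)) v)"
  by (simp add: up_str_def rev_nth)

lemma valid_up_Suc: "valid_up r par (Suc k) v \<longleftrightarrow> v \<noteq> r \<and> valid_up r par k (par v)"
  unfolding valid_up_def by (auto simp: less_Suc_eq_0_disj funpow_swap1)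

lemma funpow_par_in_trie:
  assumes "forward_trie \<Sigma> V r par lab" "v \<in> V" "valid_up r par k v" "i \<le> k"
  shows "(par ^^ i) v \<in> V"
  using assms(4)
proof (induction i)
  case (Suc i)
  then have "(par ^^ i) v \<in> V" "(par ^^ i) v \<noteq> r"
    using assms(3) unfolding valid_up_def by auto
  then show ?case using assms(1) unfolding forward_trie_def by auto
qed (use assms(2) in simp)

text \<open>The ancestors of v strictly below the root are pairwise distinct, since the root
  is reached from each of them.\<close>
lemma valid_up_le_card:
  assumes trie: "forward_trie \<Sigma> V r par lab" and "v \<in> V" and "valid_up r par k v"
  shows "k \<le> card V"
proof -
  define d where "d = (LEAST d. (par ^^ d) v = r)"
  have "\<exists>d. (par ^^ d) v = r" using trie \<open>v \<in> V\<close> unfolding forward_trie_def by blast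
  then have d_root: "(par ^^ d) v = r" unfolding d_def by (rule LeastI_ex)
  have d_valid: "valid_up r par d v" unfolding valid_up_def d_def using not_less_Least by blast
  have "k \<le> d" using \<open>valid_up r par k v\<close> d_root unfolding valid_up_def using not_le by blast
  have distinct: "(par ^^ i) v \<noteq> (par ^^ j) v" if "i < j" "j < d" for i j
  proof
    assume "(par ^^ i) v = (par ^^ j) v"
    then have "(par ^^ (d - j + i)) v = (par ^^ d) v"
      using that by (metis funpow_add le_add_diff_inverse2 less_imp_le_nat o_apply)
    moreover have "d - j + i < d" using that by simp
    ultimately show False using d_valid d_root unfolding valid_up_def by blast
  qed
  have "inj_on (\<lambda>i. (par ^^ i) v) {..<d}"
    by (rule inj_onI) (metis distinct lessThan_iff linorder_neqE_nat)
  moreover have "(\<lambda>i. (par ^^ i) v) ` {..<d} \<subseteq> V"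
    using funpow_par_in_trie[OF trie \<open>v \<in> V\<close> d_valid] by auto
  moreover have "finite V" using trie unfolding forward_trie_def by auto
  ultimately have "d \<le> card V" by (metis card_inj_on_le card_lessThan)
  with \<open>k \<le> d\<close> show ?thesis by simp
qed

lemma trie_Suffix_subset:
  assumes "forward_trie \<Sigma> V r par lab"
  shows "trie_Suffix V r par lab \<subseteq> (\<lambda>(k, l). up_str par lab k l) ` ({..card V} \<times> V)"
proof
  fix s assume "s \<in> trie_Suffix V r par lab"
  then obtain k l where s: "s = up_str par lab k l" "l \<in> V" "valid_up r par k l"
    unfolding trie_Suffix_def trie_leaves_def by blast
  then have "k \<le> card V" using valid_up_le_card[OF assms] by blast
  with s show "s \<in> (\<lambda>(k, l). up_str par lab k l) ` ({..card V} \<times> V)" by force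
qed

lemma finite_trie_Suffix:
  "forward_trie \<Sigma> V r par lab \<Longrightarrow> finite (trie_Suffix V r par lab)"
  by (rule finite_subset[OF trie_Suffix_subset]) (auto simp: forward_trie_def)

lemma card_trie_Suffix_le:
  assumes "forward_trie \<Sigma> V r par lab"
  shows "card (trie_Suffix V r par lab) \<le> (card V + 1) * card V"
proof -
  have "finite V" using assms unfolding forward_trie_def by auto
  have "card (trie_Suffix V r par lab) \<le> card ((\<lambda>(k, l). up_str par lab k l) ` ({..card V} \<times> V))"
    using trie_Suffix_subset[OF assms] \<open>finite V\<close> by (intro card_mono) auto
  also have "\<dots> \<le> card ({..card V} \<times> V)" by (rule card_image_le) (use \<open>finite V\<close> in auto)
  finally show ?thesis by (simp add: card_cartesian_product)
qed

lemma suffix_array_size_le: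
  assumes "forward_trie \<Sigma> V r par lab"
  shows "suffix_array_size V r par lab \<le> (card V + 1) * card V"
  unfolding suffix_array_size_def
  using card_mono[OF finite_trie_Suffix ctree_leaves_subset, OF assms finite_trie_Suffix[OF assms]]
    card_trie_Suffix_le[OF assms] by linarith

lemma suffix_array_size_le_square:
  assumes "forward_trie \<Sigma> V r par lab"
  shows "real (suffix_array_size V r par lab) \<le> 2 * real (card V) ^ 2"
proof -
  have "card V \<ge> 1" using assms unfolding forward_trie_def
    by (metis One_nat_def Suc_leI card_gt_0_iff empty_iff)
  then have "(card V + 1) * card V \<le> 2 * card V ^ 2" by (simp add: power2_eq_square)
  with suffix_array_size_le[OF assms] have "suffix_array_size V r par lab \<le> 2 * card V ^ 2"
    by linarith
  then show ?thesis by (metis of_nat_le_iff of_nat_mult of_nat_numeral of_nat_power)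
qed

text \<open>The comb: nodes 0, ..., 2m form a path spelling a^m b^m (a = 0, b = 1), and each
  node m + j of the b-part, 1 \<le> j \<le> m, gets a child 2m + j via an edge labelled $ = 2.\<close>
definition comb_nodes :: "nat \<Rightarrow> nat set" where
  "comb_nodes m = {0..3*m}"

definition comb_par :: "nat \<Rightarrow> nat \<Rightarrow> nat" where
  "comb_par m v = (if v \<le> 2*m then v - 1 else v - m)"

definition comb_lab :: "nat \<Rightarrow> nat \<Rightarrow> nat" where
  "comb_lab m v = (if v \<le> m then 0 else if v \<le> 2*m then 1 else 2)"

lemma card_comb_nodes: "card (comb_nodes m) = 3*m + 1"
  by (simp add: comb_nodes_def)

lemma funpow_comb_par_spine: "v \<le> 2*m \<Longrightarrow> (comb_par m ^^ i) v = v - i"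
  by (induction i) (auto simp: comb_par_def)

lemma comb_forward_trie: "forward_trie {0, 1, 2} (comb_nodes m) 0 (comb_par m) (comb_lab m)"
  unfolding forward_trie_def
proof (intro conjI ballI impI)
  fix v assume v: "v \<in> comb_nodes m"
  show "\<exists>k. (comb_par m ^^ k) v = 0"
  proof (cases "v \<le> 2*m")
    case True
    then show ?thesis using funpow_comb_par_spine[OF True, of v] by (intro exI[of _ v]) simp
  next
    case False
    have "(comb_par m ^^ Suc (v - m)) v = (comb_par m ^^ (v - m)) (v - m)"
      using False by (simp only: funpow_Suc_right o_apply) (simp add: comb_par_def)
    also have "\<dots> = 0"
      using v funpow_comb_par_spine[of "v - m" m "v - m"] unfolding comb_nodes_def by simp
    finally show ?thesis by blast
  qed
qed (auto simp: comb_nodes_def comb_par_def comb_lab_def split: if_splits)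

lemma comb_leaves:
  assumes "1 \<le> m"
  shows "trie_leaves (comb_nodes m) 0 (comb_par m) = {2*m<..3*m}"
proof (intro equalityI subsetI)
  fix l assume leaf: "l \<in> trie_leaves (comb_nodes m) 0 (comb_par m)"
  have "l \<noteq> comb_par m w" if "w \<in> comb_nodes m" "w \<noteq> 0" for w
    using leaf that unfolding trie_leaves_def by blast
  from this[of "l + 1"] this[of "3*m"] assms leaf show "l \<in> {2*m<..3*m}"
    unfolding trie_leaves_def comb_nodes_def comb_par_def by (auto split: if_splits)
qed (auto simp: trie_leaves_def comb_nodes_def comb_par_def)

lemma comb_up_str_spine:
  assumes "i \<le> m" "j \<le> m"
  shows "up_str (comb_par m) (comb_lab m) (i + j) (m + j) = replicate i 0 @ replicate j 1"
proof (rule nth_equalityI)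
  fix p assume "p < length (up_str (comb_par m) (comb_lab m) (i + j) (m + j))"
  then have "p < i + j" by (simp add: up_str_def)
  then have "up_str (comb_par m) (comb_lab m) (i + j) (m + j) ! p = comb_lab m (Suc (m + p) - i)"
    using assms by (simp add: nth_up_str funpow_comb_par_spine)
  then show "up_str (comb_par m) (comb_lab m) (i + j) (m + j) ! p = (replicate i 0 @ replicate j 1) ! p"
    using assms \<open>p < i + j\<close> by (auto simp: comb_lab_def nth_append)
qed (simp add: up_str_def)

lemma comb_up_str_spine_no_dollar:
  "v \<le> 2*m \<Longrightarrow> 2 \<notin> set (up_str (comb_par m) (comb_lab m) k v)"
  by (auto simp: up_str_def funpow_comb_par_spine comb_lab_def)

lemma comb_Suffix_no_dollar_butlast:
  assumes "1 \<le> m" "s \<in> trie_Suffix (comb_nodes m) 0 (comb_par m) (comb_lab m)"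
  shows "2 \<notin> set (butlast s)"
proof -
  obtain k l where s: "s = up_str (comb_par m) (comb_lab m) k l" and l: "l \<in> {2*m<..3*m}"
    using assms comb_leaves unfolding trie_Suffix_def by blast
  show ?thesis
  proof (cases k)
    case (Suc k')
    then have "butlast s = up_str (comb_par m) (comb_lab m) k' (comb_par m l)"
      using s by (simp add: up_str_Suc)
    moreover have "comb_par m l \<le> 2*m" using l by (auto simp: comb_par_def)
    ultimately show ?thesis using comb_up_str_spine_no_dollar by simp
  qed (simp add: s up_str_def)
qed

lemma comb_Suffix_mem:
  assumes "i \<le> m" "1 \<le> j" "j \<le> m"
  shows "replicate i 0 @ replicate j 1 @ [2] \<in> trie_Suffix (comb_nodes m) 0 (comb_par m) (comb_lab m)"
proof -
  have "valid_up 0 (comb_par m) (i + j) (m + j)"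
    using assms by (simp add: valid_up_def funpow_comb_par_spine)
  then have "valid_up 0 (comb_par m) (Suc (i + j)) (2*m + j)"
    using assms by (simp add: valid_up_Suc comb_par_def)
  moreover have "up_str (comb_par m) (comb_lab m) (Suc (i + j)) (2*m + j)
      = replicate i 0 @ replicate j 1 @ [2]"
    using assms by (simp add: up_str_Suc comb_par_def comb_lab_def comb_up_str_spine)
  moreover have "2*m + j \<in> trie_leaves (comb_nodes m) 0 (comb_par m)"
    using assms comb_leaves by simp
  ultimately show ?thesis unfolding trie_Suffix_def by (metis (mono_tags, lifting) mem_Collect_eq)
qed

lemma comb_suffix_array_size_ge:
  assumes "1 \<le> m"
  shows "(m + 1) * m \<le> suffix_array_size (comb_nodes m) 0 (comb_par m) (comb_lab m)"
proof -
  define S where "S = trie_Suffix (comb_nodes m) 0 (comb_par m) (comb_lab m)"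
  define word where "word = (\<lambda>(i, j). replicate i (0::nat) @ replicate j 1 @ [2])"
  have "inj_on word ({..m} \<times> {1..m})"
  proof (rule inj_onI, clarify)
    fix i j i' j' assume "word (i, j) = word (i', j')"
    then have "count_list (word (i, j)) 0 = count_list (word (i', j')) 0"
      "count_list (word (i, j)) 1 = count_list (word (i', j')) 1" by simp_all
    then show "i = i' \<and> j = j'" by (simp add: word_def count_list_eq_length_filter filter_replicate)
  qed
  then have "card (word ` ({..m} \<times> {1..m})) = (m + 1) * m"
    by (simp add: card_image card_cartesian_product)
  moreover have "word (i, j) \<in> ctree_leaves S" if "i \<le> m" "1 \<le> j" "j \<le> m" for i j
  proof (rule ctree_leavesI)
    show "word (i, j) \<in> S" unfolding S_def word_def using comb_Suffix_mem that by simp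
    fix u assume u: "word (i, j) @ u \<in> S"
    show "u = []"
    proof (rule ccontr)
      assume "u \<noteq> []"
      then have "butlast (word (i, j) @ u) = word (i, j) @ butlast u"
        by (subst butlast_append) simp
      then have "2 \<notin> set (word (i, j))"
        using comb_Suffix_no_dollar_butlast[OF assms] u unfolding S_def by (metis Un_iff set_append)
      then show False by (simp add: word_def)
    qed
  qed
  then have "word ` ({..m} \<times> {1..m}) \<subseteq> ctree_leaves S" by auto
  moreover have "finite (ctree_leaves S)"
    using finite_trie_Suffix[OF comb_forward_trie] ctree_leaves_subset finite_subset
    unfolding S_def by blast
  ultimately show ?thesis unfolding suffix_array_size_def S_def by (metis card_mono)
qed

lemma comb_suffix_array_size_ge_square:
  assumes "1 \<le> m"
  shows "1/16 * real (card (comb_nodes m)) ^ 2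
    \<le> real (suffix_array_size (comb_nodes m) 0 (comb_par m) (comb_lab m))"
proof -
  have "(3*m + 1)^2 \<le> 16 * ((m + 1) * m)" using assms by (simp add: power2_eq_square algebra_simps)
  also have "\<dots> \<le> 16 * suffix_array_size (comb_nodes m) 0 (comb_par m) (comb_lab m)"
    using comb_suffix_array_size_ge[OF assms] by simp
  finally have "real ((3*m + 1)^2)
      \<le> real (16 * suffix_array_size (comb_nodes m) 0 (comb_par m) (comb_lab m))"
    by (rule of_nat_mono)
  then show ?thesis by (simp add: card_comb_nodes)
qed

theorem corollary1:
  shows "(\<exists>C::real. \<forall>(\<Sigma>::nat set) (V::nat set) r par (lab::nat \<Rightarrow> nat).
            forward_trie \<Sigma> V r par lab \<longrightarrow>
            real (suffix_array_size V r par lab) \<le> C * real (card V) ^ 2)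
       \<and> (\<exists>c::real. c > 0 \<and> (\<exists>\<sigma>::nat. \<forall>N::nat. \<exists>(\<Sigma>::nat set) (V::nat set) r par (lab::nat \<Rightarrow> nat).
            forward_trie \<Sigma> V r par lab \<and> card \<Sigma> \<le> \<sigma> \<and> card V \<ge> N \<and>
            real (suffix_array_size V r par lab) \<ge> c * real (card V) ^ 2))"
proof (rule conjI, goal_cases)
  case 1
  show ?case using suffix_array_size_le_square by (intro exI[of _ 2]) blast
next
  case 2
  show ?case
  proof (intro exI[of _ "1/16"] conjI exI[of _ 3] allI, goal_cases)
    case (2 N)
    have "card {0, 1, 2::nat} \<le> 3" "N \<le> card (comb_nodes (Suc N))" "1 \<le> Suc N"
      by (simp_all add: card_comb_nodes)
    with comb_forward_trie comb_suffix_array_size_ge_square show ?case by blast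
  qed simp
qed

end
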